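(* Let $\mathcal{A}$ be a (finite) activation algebra and $M$ a finite set of morphisms of $\mathcal{T}_\mathcal{A}$. If $\tau\in M^\omega$ has an accepting run $(\Theta_i,\sigma_i)_{i\in\omega}$, then $\tau$ describes a path through $\mathcal{T}_\mathcal{A}$ which satisfies the trace condition of $\mathcal{T}_\mathcal{A}$.
   Context: An activation algebra $\mathcal{A}=(A,\le,\vee,0,\alpha)$ is a finite join-semilattice $(A,\le,\vee)$ with least element $0$, together with a distinguished element $\alpha\in A$ with $\alpha\neq 0$. The category $\mathcal{T}_\mathcal{A}$ has the finite sets as objects; a morphism $R\colon X\to Y$ is a relation $R\subseteq X\times A\times Y$; the composite of $R\colon X\to Y$ and $R'\colon Y\to Z$ is $R'\circ R=\{(x,c,z)\mid \exists y\in Y,\ a,b\in A:\ (x,a,y)\in R,\ (y,b,z)\in R',\ a\vee b=c\}$, and the identity is $1_X=\{(x,0,x)\mid x\in X\}$. A sequence $\tau\in M^\omega$ of morphisms describes a path if $\mathrm{cod}(\tau_i)=\mathrm{dom}(\tau_{i+1})$ for all $i$; write $P(n<m)=\tau_{m-1}\circ\cdots\circ\tau_n$ for $n<m$. Such a path satisfies the trace condition if there exist a strictly increasing sequence $k_0<k_1<\cdots$ of natural numbers and elements $s_i\in\mathrm{dom}(\tau_{k_i})$ with $(s_i,\alpha,s_{i+1})\in P(k_i<k_{i+1})$ for all $i$. Safra boards. Fix a countable set $\mathcal{C}\supseteq\omega$ of chips. A Safra board on $\mathcal{A}$ and a finite set $X$ is a pair $(\Theta,\sigma)$ where the control $\Theta\subseteq\mathcal{C}$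 is a finite set with a linear order $\le$, and $\sigma\colon X\times A\to\mathcal{P}(\mathcal{P}(\Theta))$, such that every $\gamma\in\Theta$ belongs to some $S\in\sigma(x,a)$. The elements $S\in\sigma(x,a)$ are called stacks (bottom = $\le$-least, top = $\le$-greatest element). A chip $\gamma\in\Theta$ is covered if it is not the top element of any stack $S\in\sigma(x,a)$, for any $x,a$. Transitions between boards: (i) $\tau$-successor, for $\tau\colon X\to Y$, written $(\Theta,\sigma)\xrightarrow{\tau}(\Theta',\sigma')$: first let $\sigma^*(y,a)=\{S\mid S\in\sigma(x,b)\text{ for some }x\in X,b\in A, c\in A \text{ with }(x,c,y)\in\tau\text{ and }a=b\vee c\}$ and let $\Theta^*$ be the set of chips occurring in some stack of $\sigma^*$, with the order inherited from $\Theta$. Then choose a finite linearly ordered $\Theta^\circ\subseteq\mathcal{C}\setminus\Theta$ and a bijection $\iota$ from $\{y\in Y\mid\sigma^*(y,\alpha)\neq\emptyset\}$ onto $\Theta^\circ$, and set $\sigma'(y,\alpha)=\emptyset$, $\sigma'(y,0)=\sigma^*(y,0)\cup\{S\cup\{\iota(y)\}\mid S\in\sigma^*(y,\alpha)\}$, $\sigma'(y,a)=\sigma^*(y,a)$ for $a\notin\{0,\alpha\}$, and $\Theta'=\Theta^*\oplus\Theta^\circ$ (concatenation: all elements of $\Theta^*$ below all elements of $\Theta^\circ$). (ii) Weakening $(\Theta,\sigma)\xrightarrow{W}(\Theta',\sigma')$: a board on the same set with $\sigma'(x,a)\subseteq\sigma(x,a)$ for all $x,a$ and $\Theta'\subseteq\Theta$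 (induced order) the set of chips still occurring in stacks of $\sigma'$. (iii) $\gamma$-reset for a covered $\gamma\in\Theta$, $(\Theta,\sigma)\xrightarrow{R_\gamma}(\Theta',\sigma')$: for a stack $S$ let $S{\upharpoonright}\gamma=\{z\in S\mid z\le\gamma\}$ if $\gamma\in S$ and $S{\upharpoonright}\gamma=S$ otherwise; $\sigma'(x,a)=\{S{\upharpoonright}\gamma\mid S\in\sigma(x,a)\}$, and $\Theta'$ is the set of chips occurring in stacks of $\sigma'$. (iv) Population $(\Theta,\sigma)\xrightarrow{P}(\Theta,\sigma')$: $\sigma(x,0)\subseteq\sigma'(x,0)\subseteq\sigma(x,0)\cup\{\emptyset\}$ for all $x$ and $\sigma'(x,a)=\sigma(x,a)$ for $a\neq 0$. A run of $\tau\in M^\omega$ is a sequence $(\Theta_i,\sigma_i)_{i\in\omega}$ of boards together with a strictly monotone $\iota\colon\omega\to\omega$ such that for $i=\iota(n)$ one has $(\Theta_i,\sigma_i)\xrightarrow{\tau_n}(\Theta_{i+1},\sigma_{i+1})$, and for $i$ not in the image of $\iota$ the step $(\Theta_i,\sigma_i)\to(\Theta_{i+1},\sigma_{i+1})$ is a weakening, a population, or a $\gamma$-reset for some $\gamma\in\Theta_i$. A run is accepting if there are $N\in\omega$ and $\gamma\in\bigcap_{n\ge N}\Theta_n$ such that the step from index $i$ to $i+1$ is a $\gamma$-reset for infinitely many $i$. *)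

theory Defs
  imports Main "HOL-Library.Countable"
begin

text \<open>Activation algebra: the carrier is a finite type 'a of class
bounded_semilattice_sup_bot (join = sup, least element 0 = bot), together with a
distinguished element alpha different from bot. Objects of T_A are finite sets of
elements of a type 'x; a morphism records its domain, relation and codomain.\<close>

record ('x, 'a) morph =
  mdom :: "'x set"
  mrel :: "('x \<times> 'a \<times> 'x) set"
  mcod :: "'x set"

definition is_morph :: "('x, 'a) morph \<Rightarrow> bool" where
  "is_morph R \<longleftrightarrow> finite (mdom R) \<and> finite (mcod R) \<and>
     mrel R \<subseteq> mdom R \<times> UNIV \<times> mcod R"

definition rel_comp :: "('x \<times> 'a::semilattice_sup \<times> 'x) set \<Rightarrow> ('x \<times> 'a \<times> 'x) set
     \<Rightarrow> ('x \<times> 'a \<times> 'x) set" where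
  "rel_comp R R' = {(x, c, z). \<exists>y a b. (x, a, y) \<in> R \<and> (y, b, z) \<in> R' \<and> sup a b = c}"

definition id_rel :: "'x set \<Rightarrow> ('x \<times> 'a::bot \<times> 'x) set" where
  "id_rel X = {(x, bot, x) | x. x \<in> X}"

text \<open>seg tau n k = tau (n+k-1) o ... o tau n  (so P(n<m) = seg tau n (m-n)).\<close>
fun seg :: "(nat \<Rightarrow> ('x, 'a::bounded_semilattice_sup_bot) morph) \<Rightarrow> nat \<Rightarrow> nat
     \<Rightarrow> ('x \<times> 'a \<times> 'x) set" where
  "seg tau n 0 = id_rel (mdom (tau n))"
| "seg tau n (Suc k) = rel_comp (seg tau n k) (mrel (tau (n + k)))"

definition Pth :: "(nat \<Rightarrow> ('x, 'a::bounded_semilattice_sup_bot) morph) \<Rightarrow> nat \<Rightarrow> nat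
     \<Rightarrow> ('x \<times> 'a \<times> 'x) set" where
  "Pth tau n m = seg tau n (m - n)"

definition describes_path :: "(nat \<Rightarrow> ('x, 'a) morph) \<Rightarrow> bool" where
  "describes_path tau \<longleftrightarrow> (\<forall>i. mcod (tau i) = mdom (tau (Suc i)))"

definition trace_condition :: "'a::bounded_semilattice_sup_bot \<Rightarrow> (nat \<Rightarrow> ('x, 'a) morph) \<Rightarrow> bool" where
  "trace_condition alpha tau \<longleftrightarrow>
     (\<exists>k :: nat \<Rightarrow> nat. \<exists>s :: nat \<Rightarrow> 'x. strict_mono k \<and>
        (\<forall>i. s i \<in> mdom (tau (k i)) \<and> (s i, alpha, s (Suc i)) \<in> Pth tau (k i) (k (Suc i))))"

record ('x, 'c, 'a) board =
  bX :: "'x set"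
  bTheta :: "'c set"
  bLe :: "'c rel"
  bSigma :: "'x \<Rightarrow> 'a \<Rightarrow> 'c set set"

definition is_board :: "('x, 'c, 'a) board \<Rightarrow> bool" where
  "is_board B \<longleftrightarrow> finite (bX B) \<and> finite (bTheta B) \<and>
     bLe B \<subseteq> bTheta B \<times> bTheta B \<and> linear_order_on (bTheta B) (bLe B) \<and>
     (\<forall>x a. x \<notin> bX B \<longrightarrow> bSigma B x a = {}) \<and>
     (\<forall>x a S. S \<in> bSigma B x a \<longrightarrow> S \<subseteq> bTheta B) \<and>
     (\<forall>g \<in> bTheta B. \<exists>x \<in> bX B. \<exists>a S. S \<in> bSigma B x a \<and> g \<in> S)"

definition chips_of :: "('x \<Rightarrow> 'a \<Rightarrow> 'c set set) \<Rightarrow> 'c set" where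
  "chips_of sig = {g. \<exists>x a S. S \<in> sig x a \<and> g \<in> S}"

definition is_top :: "'c rel \<Rightarrow> 'c \<Rightarrow> 'c set \<Rightarrow> bool" where
  "is_top le g S \<longleftrightarrow> g \<in> S \<and> (\<forall>z \<in> S. (z, g) \<in> le)"

definition covered :: "('x, 'c, 'a) board \<Rightarrow> 'c \<Rightarrow> bool" where
  "covered B g \<longleftrightarrow> g \<in> bTheta B \<and> (\<forall>x a S. S \<in> bSigma B x a \<longrightarrow> \<not> is_top (bLe B) g S)"

definition sigma_star :: "('x, 'c, 'a::bounded_semilattice_sup_bot) board \<Rightarrow> ('x, 'a) morph
     \<Rightarrow> 'x \<Rightarrow> 'a \<Rightarrow> 'c set set" where
  "sigma_star B tau y a = {S. \<exists>x b c. S \<in> bSigma B x b \<and> (x, c, y) \<in> mrel tau \<and> a = sup b c}"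

definition succ_step :: "'a::bounded_semilattice_sup_bot \<Rightarrow> ('x, 'a) morph
     \<Rightarrow> ('x, 'c, 'a) board \<Rightarrow> ('x, 'c, 'a) board \<Rightarrow> bool" where
  "succ_step alpha tau B B' \<longleftrightarrow>
     bX B = mdom tau \<and> bX B' = mcod tau \<and>
     (let sst = sigma_star B tau; Tst = chips_of sst in
      \<exists>Tc lo \<iota>. finite Tc \<and> Tc \<inter> bTheta B = {} \<and> lo \<subseteq> Tc \<times> Tc \<and> linear_order_on Tc lo \<and>
        bij_betw \<iota> {y \<in> mcod tau. sst y alpha \<noteq> {}} Tc \<and>
        bSigma B' = (\<lambda>y a. if a = alpha then {}
                            else if a = bot then sst y bot \<union> {insert (\<iota> y) S | S. S \<in> sst y alpha}
                            else sst y a) \<and>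
        bTheta B' = Tst \<union> Tc \<and>
        bLe B' = (bLe B \<inter> (Tst \<times> Tst)) \<union> lo \<union> (Tst \<times> Tc))"

definition weak_step :: "('x, 'c, 'a) board \<Rightarrow> ('x, 'c, 'a) board \<Rightarrow> bool" where
  "weak_step B B' \<longleftrightarrow> bX B' = bX B \<and> (\<forall>x a. bSigma B' x a \<subseteq> bSigma B x a) \<and>
     bTheta B' = chips_of (bSigma B') \<and> bLe B' = bLe B \<inter> (bTheta B' \<times> bTheta B')"

definition restr :: "'c rel \<Rightarrow> 'c \<Rightarrow> 'c set \<Rightarrow> 'c set" where
  "restr le g S = (if g \<in> S then {z \<in> S. (z, g) \<in> le} else S)"

definition reset_step :: "'c \<Rightarrow> ('x, 'c, 'a) board \<Rightarrow> ('x, 'c, 'a) board \<Rightarrow> bool" where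
  "reset_step g B B' \<longleftrightarrow> covered B g \<and> bX B' = bX B \<and>
     bSigma B' = (\<lambda>x a. restr (bLe B) g ` bSigma B x a) \<and>
     bTheta B' = chips_of (bSigma B') \<and> bLe B' = bLe B \<inter> (bTheta B' \<times> bTheta B')"

definition pop_step :: "('x, 'c, 'a::bot) board \<Rightarrow> ('x, 'c, 'a) board \<Rightarrow> bool" where
  "pop_step B B' \<longleftrightarrow> bX B' = bX B \<and> bTheta B' = bTheta B \<and> bLe B' = bLe B \<and>
     (\<forall>x. bSigma B x bot \<subseteq> bSigma B' x bot \<and> bSigma B' x bot \<subseteq> bSigma B x bot \<union> {{}}) \<and>
     (\<forall>x a. a \<noteq> bot \<longrightarrow> bSigma B' x a = bSigma B x a)"

definition is_run :: "'a::bounded_semilattice_sup_bot \<Rightarrow> (nat \<Rightarrow> ('x, 'a) morph)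
     \<Rightarrow> (nat \<Rightarrow> ('x, 'c, 'a) board) \<Rightarrow> (nat \<Rightarrow> nat) \<Rightarrow> bool" where
  "is_run alpha tau B \<iota> \<longleftrightarrow> (\<forall>i. is_board (B i)) \<and> strict_mono \<iota> \<and>
     (\<forall>n. succ_step alpha (tau n) (B (\<iota> n)) (B (Suc (\<iota> n)))) \<and>
     (\<forall>i. i \<notin> range \<iota> \<longrightarrow>
        weak_step (B i) (B (Suc i)) \<or> pop_step (B i) (B (Suc i)) \<or>
        (\<exists>g \<in> bTheta (B i). reset_step g (B i) (B (Suc i))))"

definition accepting :: "(nat \<Rightarrow> ('x, 'c, 'a) board) \<Rightarrow> (nat \<Rightarrow> nat) \<Rightarrow> bool" where
  "accepting B \<iota> \<longleftrightarrow> (\<exists>N g. (\<forall>n \<ge> N. g \<in> bTheta (B n)) \<and>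
     infinite {i. i \<notin> range \<iota> \<and> reset_step g (B i) (B (Suc i))})"

end

theory Submission
  imports Defs "HOL-Library.Infinite_Set"
begin

text \<open>Let \<open>g\<close> be a chip that is present from some time \<open>N\<close> on and is reset infinitely
often. Every stack containing \<open>g\<close> at time \<open>i + 1\<close> descends from a stack containing \<open>g\<close> at
time \<open>i\<close>; since boards are finite, Koenig's lemma yields an infinite thread of stacks
containing \<open>g\<close>. Along the thread the stack can only shrink, except at steps where the label
accumulated by the stack reaches \<open>\<alpha>\<close> and a fresh chip is pushed. If there were only finitely
many such steps, then after some \<open>g\<close>-reset \<open>g\<close> would stay on top of the thread's stack, so it
could not be covered at the next \<open>g\<close>-reset. The label of the thread's stack, which drops to
\<open>0\<close> at every push, is the label of the path segment the thread has followed since the last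
push; hence between two consecutive pushes the thread follows a segment labelled \<open>\<alpha>\<close>, and
these segments form the trace.\<close>

lemma enumerate_gap:
  fixes P :: "nat set"
  assumes "infinite P" "enumerate P j < k" "k < enumerate P (Suc j)"
  shows "k \<notin> P"
proof
  assume "k \<in> P"
  then obtain l where "enumerate P l = k" using enumerate_Ex[OF assms(1)] by blast
  with assms show False by auto
qed

section \<open>Koenig's lemma for levelled graphs\<close>

definition level_chain ::
  "(nat \<Rightarrow> 'v set) \<Rightarrow> (nat \<Rightarrow> 'v \<Rightarrow> 'v \<Rightarrow> bool) \<Rightarrow> nat \<Rightarrow> nat \<Rightarrow> (nat \<Rightarrow> 'v) \<Rightarrow> bool" where
  "level_chain T L i j p \<longleftrightarrow>
     (\<forall>k. i \<le> k \<longrightarrow> k < j \<longrightarrow> L k (p k) (p (Suc k))) \<and> (\<forall>k. i \<le> k \<longrightarrow> k \<le> j \<longrightarrow> p k \<in> T k)"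

lemma level_chain_mono:
  "level_chain T L i j p \<Longrightarrow> i \<le> i' \<Longrightarrow> j' \<le> j \<Longrightarrow> level_chain T L i' j' p"
  by (auto simp: level_chain_def)

lemma level_chain_common_start:
  assumes "finite C" and chains: "\<forall>j\<ge>i. \<exists>p. p i \<in> C \<and> level_chain T L i j p"
  shows "\<exists>v\<in>C. \<forall>j\<ge>i. \<exists>p. p i = v \<and> level_chain T L i j p"
proof (rule ccontr)
  assume "\<not> ?thesis"
  then obtain J where J: "\<forall>v\<in>C. i \<le> J v \<and> \<not> (\<exists>p. p i = v \<and> level_chain T L i (J v) p)"
    by (metis (no_types, lifting))
  obtain p where p: "p i \<in> C" "level_chain T L i (Max (J ` C) + i) p"
    using chains by (meson le_add2)
  have "J (p i) \<le> Max (J ` C) + i" using \<open>finite C\<close> p(1) by (simp add: trans_le_add1)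
  with p J show False using level_chain_mono by blast
qed

lemma level_chain_from_root:
  assumes parent: "\<And>i w. w \<in> T (Suc i) \<Longrightarrow> \<exists>v\<in>T i. L i v w"
  shows "w \<in> T j \<Longrightarrow> \<exists>p. p j = w \<and> level_chain T L 0 j p"
proof (induction j arbitrary: w)
  case 0
  then show ?case by (intro exI[of _ "\<lambda>_. w"]) (auto simp: level_chain_def)
next
  case (Suc j)
  then obtain v p where "v \<in> T j" "L j v w" "p j = v" "level_chain T L 0 j p"
    using parent by blast
  with Suc.prems have "level_chain T L 0 (Suc j) (p(Suc j := w))"
    by (auto simp: level_chain_def less_Suc_eq le_Suc_eq)
  then show ?case by (metis fun_upd_same)
qed

lemma koenig_levels:
  assumes fin: "\<And>i. finite (T i)" and ne: "\<And>i. T i \<noteq> {}"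
    and parent: "\<And>i w. w \<in> T (Suc i) \<Longrightarrow> \<exists>v\<in>T i. L i v w"
  shows "\<exists>f. \<forall>i. f i \<in> T i \<and> L i (f i) (f (Suc i))"
proof -
  define extensible where
    "extensible i v \<longleftrightarrow> (\<forall>j\<ge>i. \<exists>p. p i = v \<and> level_chain T L i j p)" for i v
  have root: "\<exists>v\<in>T 0. extensible 0 v"
  proof -
    have "\<exists>p. p 0 \<in> T 0 \<and> level_chain T L 0 j p" for j
    proof -
      obtain w where "w \<in> T j" using ne by blast
      then obtain p where "level_chain T L 0 j p" using level_chain_from_root[of T L, OF parent] by blast
      then show ?thesis by (auto simp: level_chain_def)
    qed
    then show ?thesis using level_chain_common_start[OF fin] unfolding extensible_def by blast
  qed
  have child: "\<exists>w. (w \<in> T (Suc i) \<and> extensible (Suc i) w) \<and> L i v w"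
    if "v \<in> T i \<and> extensible i v" for i v
  proof -
    let ?C = "{w \<in> T (Suc i). L i v w}"
    have "\<exists>p. p (Suc i) \<in> ?C \<and> level_chain T L (Suc i) j p" if "Suc i \<le> j" for j
    proof -
      obtain p where "p i = v" "level_chain T L i j p"
        using \<open>v \<in> T i \<and> extensible i v\<close> \<open>Suc i \<le> j\<close> unfolding extensible_def by (meson Suc_leD)
      with \<open>Suc i \<le> j\<close> have "p (Suc i) \<in> ?C" by (auto simp: level_chain_def)
      moreover have "level_chain T L (Suc i) j p"
        using level_chain_mono \<open>level_chain T L i j p\<close> by (meson le_SucI order_refl)
      ultimately show ?thesis by blast
    qed
    then have "\<exists>w\<in>?C. extensible (Suc i) w"
      using level_chain_common_start[of ?C "Suc i" T L] fin unfolding extensible_def by auto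
    then show ?thesis by blast
  qed
  show ?thesis
    using dependent_nat_choice[of "\<lambda>i v. v \<in> T i \<and> extensible i v" L] root child by blast
qed

lemma Pth_refl: "x \<in> mdom (tau t) \<Longrightarrow> (x, bot, x) \<in> Pth tau t t"
  by (simp add: Pth_def id_rel_def)

lemma Pth_snoc:
  assumes "(y, a, x) \<in> Pth tau t n" "t \<le> n" "(x, c, x') \<in> mrel (tau n)"
  shows "(y, sup a c, x') \<in> Pth tau t (Suc n)"
  using assms by (auto simp: Pth_def Suc_diff_le rel_comp_def)

lemma reset_step_top:
  assumes "reset_step g B0 B1" "is_board B1" "S \<in> bSigma B1 x a" "g \<in> S"
  shows "is_top (bLe B1) g S"
proof -
  obtain S0 where S0: "S = restr (bLe B0) g S0" using assms(1,3) by (auto simp: reset_step_def)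
  with \<open>g \<in> S\<close> have "\<forall>z\<in>S. (z, g) \<in> bLe B0" by (auto simp: restr_def split: if_splits)
  moreover have "S \<subseteq> bTheta B1" using assms(2,3) by (auto simp: is_board_def)
  ultimately show ?thesis using assms(1,4) by (auto simp: reset_step_def is_top_def)
qed

locale board_run =
  fixes alpha :: "'a::bounded_semilattice_sup_bot"
    and tau :: "nat \<Rightarrow> ('x, 'a) morph"
    and B :: "nat \<Rightarrow> ('x, 'c, 'a) board"
    and iota :: "nat \<Rightarrow> nat"
  assumes run: "is_run alpha tau B iota"
    and morph: "\<And>n. is_morph (tau n)"
begin

lemma board: "is_board (B i)"
  using run by (simp add: is_run_def)

lemma strict_mono_iota: "strict_mono iota"
  using run by (simp add: is_run_def)

lemma iota_less_iff: "iota m < iota n \<longleftrightarrow> m < n"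
  using strict_mono_less[OF strict_mono_iota] .

lemma succ_step_iota: "succ_step alpha (tau n) (B (iota n)) (B (Suc (iota n)))"
  using run by (simp add: is_run_def)

lemma other_step:
  "i \<notin> range iota \<Longrightarrow> weak_step (B i) (B (Suc i)) \<or> pop_step (B i) (B (Suc i)) \<or>
     (\<exists>g\<in>bTheta (B i). reset_step g (B i) (B (Suc i)))"
  using run by (simp add: is_run_def)

lemma bX_Suc_other: "i \<notin> range iota \<Longrightarrow> bX (B (Suc i)) = bX (B i)"
  using other_step[of i] by (auto simp: weak_step_def pop_step_def reset_step_def)

lemma bSigma_subset: "S \<in> bSigma (B i) x a \<Longrightarrow> S \<subseteq> bTheta (B i)"
  using board[of i] by (auto simp: is_board_def)

lemma bX_between_iota:
  "iota n < i \<Longrightarrow> i \<le> iota (Suc n) \<Longrightarrow> bX (B i) = mcod (tau n)"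
proof (induction i)
  case 0
  then show ?case by simp
next
  case (Suc i)
  show ?case
  proof (cases "i = iota n")
    case True
    then show ?thesis using succ_step_iota[of n] by (simp add: succ_step_def)
  next
    case False
    with Suc.prems have "iota n < i" by simp
    moreover have "i \<notin> range iota"
      using \<open>iota n < i\<close> Suc.prems by (auto simp: iota_less_iff Suc_le_eq)
    ultimately show ?thesis using Suc bX_Suc_other by simp
  qed
qed

lemma describes_path: "describes_path tau"
  unfolding describes_path_def
proof
  fix n
  have "bX (B (iota (Suc n))) = mcod (tau n)"
    by (rule bX_between_iota) (simp_all add: iota_less_iff)
  then show "mcod (tau n) = mdom (tau (Suc n))"
    using succ_step_iota[of "Suc n"] by (simp add: succ_step_def)
qed

lemma bLe_Suc:
  assumes "(z, h) \<in> bLe (B i)" "z \<in> bTheta (B (Suc i))" "h \<in> bTheta (B (Suc i))"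
  shows "(z, h) \<in> bLe (B (Suc i))"
proof (cases "i \<in> range iota")
  case True
  then obtain n where n: "i = iota n" by blast
  have "z \<in> bTheta (B i)" "h \<in> bTheta (B i)"
    using assms(1) board[of i] by (auto simp: is_board_def)
  with succ_step_iota[of n] assms show ?thesis
    unfolding succ_step_def Let_def n by blast
next
  case False
  then show ?thesis using other_step[of i] assms
    by (auto simp: weak_step_def pop_step_def reset_step_def)
qed

lemma is_top_Suc:
  assumes "is_top (bLe (B i)) g S" "S' \<subseteq> S" "g \<in> S'" "S' \<in> bSigma (B (Suc i)) x a"
  shows "is_top (bLe (B (Suc i))) g S'"
  unfolding is_top_def
proof (intro conjI ballI)
  fix z assume "z \<in> S'"
  with assms have "(z, g) \<in> bLe (B i)" by (auto simp: is_top_def)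
  with \<open>z \<in> S'\<close> assms(3) bSigma_subset[OF assms(4)] show "(z, g) \<in> bLe (B (Suc i))"
    using bLe_Suc by blast
qed (fact assms(3))

text \<open>The index of the morphism that the run processes next when it is at board \<open>i\<close>.\<close>

definition next_morph :: "nat \<Rightarrow> nat" where
  "next_morph i = (LEAST n. i \<le> iota n)"

lemma next_morph_iota: "next_morph (iota n) = n"
  unfolding next_morph_def
  by (rule Least_equality) (auto simp: strict_mono_less_eq[OF strict_mono_iota])

lemma next_morph_Suc_iota: "next_morph (Suc (iota n)) = Suc n"
  unfolding next_morph_def
  by (rule Least_equality) (auto simp: iota_less_iff Suc_le_eq)

lemma next_morph_Suc_other: "i \<notin> range iota \<Longrightarrow> next_morph (Suc i) = next_morph i"
  unfolding next_morph_def by (metis Suc_le_eq le_less rangeI)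

lemma next_morph_mono: "i \<le> j \<Longrightarrow> next_morph i \<le> next_morph j"
  unfolding next_morph_def
  by (metis (mono_tags) LeastI Least_le le_trans strict_mono_imp_increasing strict_mono_iota)

lemma iota_step_extends_Pth:
  assumes "i = iota n" "(x, c, x') \<in> mrel (tau n)"
    and "(y, a, x) \<in> Pth tau t (next_morph i)" "t \<le> next_morph i"
  shows "(y, sup a c, x') \<in> Pth tau t (next_morph (Suc i))"
  using Pth_snoc[of y a x tau t n c x'] assms by (simp add: next_morph_iota next_morph_Suc_iota)

section \<open>Threads of stacks\<close>

definition alpha_step :: "nat \<Rightarrow> 'x \<Rightarrow> 'a \<Rightarrow> 'x \<Rightarrow> 'a \<Rightarrow> bool" where
  "alpha_step i x a x' a' \<longleftrightarrow>
     (\<exists>n c. i = iota n \<and> (x, c, x') \<in> mrel (tau n) \<and> sup a c = alpha \<and> a' = bot)"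

text \<open>An \<open>\<alpha>\<close>-step pushes a fresh chip onto the stack; only its effect on the label
matters below.\<close>

definition stack_link :: "nat \<Rightarrow> 'x \<Rightarrow> 'a \<Rightarrow> 'c set \<Rightarrow> 'x \<Rightarrow> 'a \<Rightarrow> 'c set \<Rightarrow> bool" where
  "stack_link i x a S x' a' S' \<longleftrightarrow>
     (i \<notin> range iota \<and> x' = x \<and> a' = a \<and> S' \<subseteq> S) \<or>
     (\<exists>n c. i = iota n \<and> (x, c, x') \<in> mrel (tau n) \<and> a' = sup a c \<and> S' = S) \<or>
     alpha_step i x a x' a'"

lemma stack_parent:
  assumes S': "S' \<in> bSigma (B (Suc i)) x' a'" and "h \<in> S'" "h \<in> bTheta (B i)"
  shows "\<exists>x a S. S \<in> bSigma (B i) x a \<and> h \<in> S \<and> stack_link i x a S x' a' S'"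
proof (cases "i \<in> range iota")
  case True
  then obtain n where n: "i = iota n" by blast
  let ?sst = "sigma_star (B i) (tau n)"
  from succ_step_iota[of n] obtain Tc \<kappa> where
    fresh: "Tc \<inter> bTheta (B i) = {}" and
    \<kappa>: "bij_betw \<kappa> {y \<in> mcod (tau n). ?sst y alpha \<noteq> {}} Tc" and
    sig: "bSigma (B (Suc i)) = (\<lambda>y a. if a = alpha then {}
            else if a = bot then ?sst y bot \<union> {insert (\<kappa> y) S | S. S \<in> ?sst y alpha}
            else ?sst y a)"
    unfolding succ_step_def Let_def n by blast
  from S' sig consider "S' \<in> ?sst x' a'" | S where "a' = bot" "S \<in> ?sst x' alpha" "S' = insert (\<kappa> x') S"
    by (auto split: if_splits)
  then show ?thesis
  proof cases
    case 1
    then obtain x b c where "S' \<in> bSigma (B i) x b" "(x, c, x') \<in> mrel (tau n)" "a' = sup b c"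
      unfolding sigma_star_def by blast
    with \<open>h \<in> S'\<close> n show ?thesis unfolding stack_link_def by blast
  next
    case (2 S)
    then obtain x b c where x: "S \<in> bSigma (B i) x b" "(x, c, x') \<in> mrel (tau n)" "alpha = sup b c"
      unfolding sigma_star_def by blast
    then have "x' \<in> mcod (tau n)" using morph[of n] by (auto simp: is_morph_def)
    with \<kappa> 2 fresh have "\<kappa> x' \<notin> bTheta (B i)" by (auto simp: bij_betw_def)
    with 2 \<open>h \<in> S'\<close> \<open>h \<in> bTheta (B i)\<close> have "h \<in> S" by auto
    with x 2 n show ?thesis unfolding stack_link_def alpha_step_def by metis
  qed
next
  case False
  then consider "weak_step (B i) (B (Suc i))" | "pop_step (B i) (B (Suc i))"
    | g where "reset_step g (B i) (B (Suc i))"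
    using other_step by blast
  then have "\<exists>S. S \<in> bSigma (B i) x' a' \<and> S' \<subseteq> S"
  proof cases
    case 1
    then show ?thesis using S' unfolding weak_step_def by blast
  next
    case 2
    with S' \<open>h \<in> S'\<close> have "S' \<in> bSigma (B i) x' a'"
      by (cases "a' = bot") (auto simp: pop_step_def)
    then show ?thesis by blast
  next
    case 3
    with S' show ?thesis by (auto simp: reset_step_def restr_def)
  qed
  with False \<open>h \<in> S'\<close> show ?thesis unfolding stack_link_def by blast
qed

definition chip_thread :: "'c \<Rightarrow> nat \<Rightarrow> (nat \<Rightarrow> 'x) \<Rightarrow> (nat \<Rightarrow> 'a) \<Rightarrow> (nat \<Rightarrow> 'c set) \<Rightarrow> bool" where
  "chip_thread g N X A S \<longleftrightarrow> (\<forall>k. S k \<in> bSigma (B (N + k)) (X k) (A k) \<and> g \<in> S k \<and>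
     stack_link (N + k) (X k) (A k) (S k) (X (Suc k)) (A (Suc k)) (S (Suc k)))"

lemma chip_thread_exists:
  assumes "finite (UNIV :: 'a set)" and g: "\<And>n. N \<le> n \<Longrightarrow> g \<in> bTheta (B n)"
  shows "\<exists>X A S. chip_thread g N X A S"
proof -
  define T where "T i = {(x, a, S). S \<in> bSigma (B (N + i)) x a \<and> g \<in> S}" for i
  define L where "L i = (\<lambda>(x, a, S) (x', a', S'). stack_link (N + i) x a S x' a' S')" for i
  have "finite (T i)" for i
  proof (rule finite_subset)
    show "T i \<subseteq> bX (B (N + i)) \<times> UNIV \<times> Pow (bTheta (B (N + i)))"
      using board[of "N + i"] unfolding T_def is_board_def by blast
    show "finite (bX (B (N + i)) \<times> (UNIV :: 'a set) \<times> Pow (bTheta (B (N + i))))"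
      using board[of "N + i"] assms(1) unfolding is_board_def by auto
  qed
  moreover have "T i \<noteq> {}" for i
    using board[of "N + i"] g[of "N + i"] unfolding T_def is_board_def by fastforce
  moreover have "\<exists>v\<in>T i. L i v w" if "w \<in> T (Suc i)" for i w
    using that stack_parent g[of "N + i"] unfolding T_def L_def by fastforce
  ultimately obtain f where f: "\<And>i. f i \<in> T i \<and> L i (f i) (f (Suc i))"
    using koenig_levels[of T L] by blast
  define X A S where "X k = fst (f k)" and "A k = fst (snd (f k))" and "S k = snd (snd (f k))" for k
  have "f k = (X k, A k, S k)" for k unfolding X_def A_def S_def by simp
  with f have "chip_thread g N X A S" unfolding chip_thread_def by (simp add: T_def L_def)
  then show ?thesis by blast
qed

lemma chip_thread_alpha_steps_infinite:
  assumes thread: "chip_thread g N X A S"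
    and resets: "infinite {i. reset_step g (B i) (B (Suc i))}"
  shows "infinite {k. alpha_step (N + k) (X k) (A k) (X (Suc k)) (A (Suc k))}"
proof
  assume "finite {k. alpha_step (N + k) (X k) (A k) (X (Suc k)) (A (Suc k))}"
  then obtain K where "\<forall>k \<in> {k. alpha_step (N + k) (X k) (A k) (X (Suc k)) (A (Suc k))}. k < K"
    using finite_nat_set_iff_bounded by blast
  then have shrink: "S (Suc k) \<subseteq> S k" if "K \<le> k" for k
    using that thread unfolding chip_thread_def stack_link_def by fastforce
  have on_board: "S k \<in> bSigma (B (N + k)) (X k) (A k)" "g \<in> S k" for k
    using thread unfolding chip_thread_def by auto
  obtain r where r: "reset_step g (B r) (B (Suc r))" "N + K \<le> r"
    using resets by (meson infinite_nat_iff_unbounded_le mem_Collect_eq)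
  obtain r' where r': "reset_step g (B r') (B (Suc r'))" "Suc r \<le> r'"
    using resets by (meson infinite_nat_iff_unbounded_le mem_Collect_eq)
  define k where "k = Suc (r - N)"
  have idx: "N + (k + d) = Suc r + d" for d using r(2) unfolding k_def by simp
  have top: "is_top (bLe (B (Suc r + d))) g (S (k + d))" for d
  proof (induction d)
    case 0
    show ?case using reset_step_top[OF r(1) board] on_board[of "k + 0"] unfolding idx by simp
  next
    case (Suc d)
    have "K \<le> k + d" using r(2) unfolding k_def by simp
    moreover have "S (k + Suc d) \<in> bSigma (B (Suc (Suc r + d))) (X (k + Suc d)) (A (k + Suc d))"
      using on_board(1)[of "k + Suc d"] unfolding idx by simp
    ultimately show ?case using is_top_Suc[OF Suc.IH _ on_board(2)] shrink by simp
  qed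
  have "S (k + (r' - Suc r)) \<in> bSigma (B r') (X (k + (r' - Suc r))) (A (k + (r' - Suc r)))"
    using on_board(1)[of "k + (r' - Suc r)"] r'(2) unfolding idx by simp
  moreover have "covered (B r') g" using r'(1) by (simp add: reset_step_def)
  ultimately show False using top[of "r' - Suc r"] r'(2) unfolding covered_def by auto
qed

lemma chip_thread_Pth:
  assumes thread: "chip_thread g N X A S"
    and start: "A k0 = bot" "X k0 \<in> mdom (tau (next_morph (N + k0)))"
    and no_alpha: "\<And>k. k0 \<le> k \<Longrightarrow> k < k1 \<Longrightarrow> \<not> alpha_step (N + k) (X k) (A k) (X (Suc k)) (A (Suc k))"
    and "k0 \<le> k" "k \<le> k1"
  shows "(X k0, A k, X k) \<in> Pth tau (next_morph (N + k0)) (next_morph (N + k))"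
  using \<open>k0 \<le> k\<close> \<open>k \<le> k1\<close>
proof (induction k rule: dec_induct)
  case base
  then show ?case using start Pth_refl by metis
next
  case (step k)
  let ?t = "next_morph (N + k0)"
  have IH: "(X k0, A k, X k) \<in> Pth tau ?t (next_morph (N + k))" using step by simp
  have t: "?t \<le> next_morph (N + k)" using step.hyps(1) next_morph_mono by simp
  have "stack_link (N + k) (X k) (A k) (S k) (X (Suc k)) (A (Suc k)) (S (Suc k))"
    using thread unfolding chip_thread_def by blast
  moreover have "\<not> alpha_step (N + k) (X k) (A k) (X (Suc k)) (A (Suc k))"
    using no_alpha step by simp
  ultimately consider
      "N + k \<notin> range iota" "X (Suc k) = X k" "A (Suc k) = A k"
    | n c where "N + k = iota n" "(X k, c, X (Suc k)) \<in> mrel (tau n)" "A (Suc k) = sup (A k) c"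
    unfolding stack_link_def by blast
  then show ?case
  proof cases
    case 1
    then show ?thesis using IH next_morph_Suc_other by simp
  next
    case 2
    then show ?thesis using iota_step_extends_Pth[OF 2(1,2) _ t] IH by simp
  qed
qed

lemma alpha_step_next_morph:
  assumes "alpha_step i x a x' a'"
  shows "\<exists>n. i = iota n \<and> next_morph (Suc i) = Suc n \<and> x' \<in> mdom (tau (Suc n))"
proof -
  obtain n c where n: "i = iota n" "(x, c, x') \<in> mrel (tau n)"
    using assms unfolding alpha_step_def by blast
  then have "x' \<in> mcod (tau n)" using morph[of n] by (auto simp: is_morph_def)
  with n show ?thesis using describes_path next_morph_Suc_iota unfolding describes_path_def by auto
qed

lemma chip_thread_alpha_Pth:
  assumes thread: "chip_thread g N X A S"
    and alpha0: "alpha_step (N + k0) (X k0) (A k0) (X (Suc k0)) (A (Suc k0))"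
    and alpha1: "alpha_step (N + k1) (X k1) (A k1) (X (Suc k1)) (A (Suc k1))"
    and "k0 < k1"
    and between: "\<And>k. k0 < k \<Longrightarrow> k < k1 \<Longrightarrow> \<not> alpha_step (N + k) (X k) (A k) (X (Suc k)) (A (Suc k))"
  shows "(X (Suc k0), alpha, X (Suc k1)) \<in> Pth tau (next_morph (N + Suc k0)) (next_morph (N + Suc k1))"
proof -
  let ?t = "next_morph (N + Suc k0)"
  have "A (Suc k0) = bot" using alpha0 unfolding alpha_step_def by blast
  moreover have "X (Suc k0) \<in> mdom (tau ?t)"
    using alpha_step_next_morph[OF alpha0] by auto
  ultimately have path: "(X (Suc k0), A k1, X k1) \<in> Pth tau ?t (next_morph (N + k1))"
    using chip_thread_Pth[OF thread, of "Suc k0" k1 k1] between \<open>k0 < k1\<close> by simp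
  obtain n c where n: "N + k1 = iota n" "(X k1, c, X (Suc k1)) \<in> mrel (tau n)" "sup (A k1) c = alpha"
    using alpha1 unfolding alpha_step_def by blast
  have "?t \<le> next_morph (N + k1)" using \<open>k0 < k1\<close> next_morph_mono by simp
  from iota_step_extends_Pth[OF n(1,2) path this] n(3) show ?thesis by simp
qed

lemma chip_thread_trace_condition:
  assumes thread: "chip_thread g N X A S"
    and P: "infinite {k. alpha_step (N + k) (X k) (A k) (X (Suc k)) (A (Suc k))}" (is "infinite ?P")
  shows "trace_condition alpha tau"
proof -
  define e where "e = enumerate ?P"
  have e_alpha: "alpha_step (N + e j) (X (e j)) (A (e j)) (X (Suc (e j))) (A (Suc (e j)))" for j
    using enumerate_in_set[OF P] unfolding e_def by simp
  have e_less: "e j < e (Suc j)" for j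
    using P unfolding e_def by simp
  have e_gap: "\<not> alpha_step (N + l) (X l) (A l) (X (Suc l)) (A (Suc l))" if "e j < l" "l < e (Suc j)" for j l
    using enumerate_gap[OF P] that unfolding e_def by blast
  define k where "k j = next_morph (N + Suc (e j))" for j
  have k_iota: "\<exists>n. N + e j = iota n \<and> k j = Suc n \<and> X (Suc (e j)) \<in> mdom (tau (k j))" for j
    using alpha_step_next_morph[OF e_alpha[of j]] unfolding k_def by auto
  have "strict_mono k"
    unfolding strict_mono_Suc_iff
  proof
    fix j
    obtain n n' where n: "N + e j = iota n" "k j = Suc n" "N + e (Suc j) = iota n'" "k (Suc j) = Suc n'"
      using k_iota[of j] k_iota[of "Suc j"] by blast
    then have "iota n < iota n'" using e_less[of j] by linarith
    with n show "k j < k (Suc j)" by (simp add: iota_less_iff)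
  qed
  moreover have "X (Suc (e j)) \<in> mdom (tau (k j))" for j
    using k_iota by blast
  moreover have "(X (Suc (e j)), alpha, X (Suc (e (Suc j)))) \<in> Pth tau (k j) (k (Suc j))" for j
    using chip_thread_alpha_Pth[OF thread e_alpha e_alpha e_less[of j] e_gap[of j]] unfolding k_def .
  ultimately show ?thesis
    unfolding trace_condition_def by (intro exI[of _ k] exI[of _ "\<lambda>j. X (Suc (e j))"]) blast
qed

lemma trace_condition_of_accepting:
  assumes "finite (UNIV :: 'a set)" "accepting B iota"
  shows "trace_condition alpha tau"
proof -
  obtain N g where g: "\<And>n. N \<le> n \<Longrightarrow> g \<in> bTheta (B n)"
    and resets: "infinite {i. i \<notin> range iota \<and> reset_step g (B i) (B (Suc i))}"
    using assms(2) unfolding accepting_def by blast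
  obtain X A S where thread: "chip_thread g N X A S"
    using chip_thread_exists[OF assms(1) g] by blast
  have "infinite {i. reset_step g (B i) (B (Suc i))}"
    by (rule infinite_super[OF _ resets]) blast
  then show ?thesis
    using chip_thread_trace_condition[OF thread chip_thread_alpha_steps_infinite[OF thread]] by blast
qed

end

theorem mainTheorem3:
  fixes alpha :: "'a::{finite, bounded_semilattice_sup_bot}"
    and M :: "('x, 'a) morph set"
    and tau :: "nat \<Rightarrow> ('x, 'a) morph"
    and B :: "nat \<Rightarrow> ('x, 'c::countable, 'a) board"
    and \<iota> :: "nat \<Rightarrow> nat"
  assumes "alpha \<noteq> bot"
    and "infinite (UNIV :: 'c set)"
    and "finite M" and "\<forall>R \<in> M. is_morph R"
    and "\<forall>n. tau n \<in> M"
    and "is_run alpha tau B \<iota>"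
    and "accepting B \<iota>"
  shows "describes_path tau \<and> trace_condition alpha tau"
proof -
  interpret board_run alpha tau B \<iota>
    using assms(4-6) by unfold_locales auto
  show ?thesis using describes_path trace_condition_of_accepting[OF finite_UNIV assms(7)] by blast
qed

end
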